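(* Let $K$ be a field and $P$ an arbitrary poset. Let $\alpha\in FI(P)$ be an idempotent ($\alpha^2=\alpha$), and let $\varepsilon\in FI(P)$ be the diagonal element with $\varepsilon(x,x)=\alpha(x,x)$ for all $x\in P$. Then $\varepsilon$ is an idempotent and there is an invertible $\beta\in FI(P)$ with $\alpha=\beta^{-1}\varepsilon\beta$.
   Context: $K$ is a field, $P$ an arbitrary poset. $I(P)$ is the set of functions $\alpha$ assigning to each pair $x\le y$ in $P$ a value $\alpha(x,y)\in K$. An element $\alpha\in I(P)$ is a finitary series if for all $x<y$ in $P$ there are only finitely many pairs $(u,v)$ with $x\le u<v\le y$ and $\alpha(u,v)\neq0$; $FI(P)$ is the set of finitary series. $FI(P)$ is an associative $K$-algebra under pointwise addition and convolution $(\alpha\beta)(x,y)=\sum_{x\le z\le y}\alpha(x,z)\beta(z,y)$, with identity $\delta$ given by $\delta(x,y)=1$ if $x=y$ and $0$ otherwise. An element $\alpha\in FI(P)$ is diagonal if $\alpha(x,y)=0$ whenever $x\neq y$. *)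

theory Defs
  imports Main
begin

text \<open>An element of I(P) is represented by a function alpha :: P => P => K whose values
 at pairs (x,y) with not x <= y are fixed to 0 (they are not part of the series).\<close>

definition FI :: "('a::order \<Rightarrow> 'a \<Rightarrow> 'k::field) set" where
  "FI = {f. (\<forall>x y. \<not> x \<le> y \<longrightarrow> f x y = 0) \<and>
            (\<forall>x y. x < y \<longrightarrow> finite {(u, v). x \<le> u \<and> u < v \<and> v \<le> y \<and> f u v \<noteq> 0})}"

text \<open>Convolution: the sum over the interval [x,y], written as a sum over the
 (finite, for finitary series) set of indices with nonzero summand.\<close>

definition conv :: "('a::order \<Rightarrow> 'a \<Rightarrow> 'k::field) \<Rightarrow> ('a \<Rightarrow> 'a \<Rightarrow> 'k) \<Rightarrow> 'a \<Rightarrow> 'a \<Rightarrow> 'k" where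
  "conv f g x y = (if x \<le> y then
      (\<Sum>z \<in> {z. x \<le> z \<and> z \<le> y \<and> f x z * g z y \<noteq> 0}. f x z * g z y) else 0)"

definition delta :: "'a::order \<Rightarrow> 'a \<Rightarrow> 'k::field" where
  "delta x y = (if x = y then 1 else 0)"

definition diag_part :: "('a::order \<Rightarrow> 'a \<Rightarrow> 'k::field) \<Rightarrow> 'a \<Rightarrow> 'a \<Rightarrow> 'k" where
  "diag_part f x y = (if x = y then f x x else 0)"

end

theory Submission
  imports Defs
begin

(* Let e(x) = alpha(x,x).  Comparing diagonals in alpha*alpha = alpha gives
   e(x) in {0,1}, so the diagonal part eps of alpha is idempotent.  The series
     u(x,y) = e(x) alpha(x,y) + (1 - e(x)) (delta(x,y) - alpha(x,y)),
   i.e. u = eps*alpha + (delta - eps)*(delta - alpha), is finitary with unit diagonal and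
   satisfies eps*u = eps*alpha = u*alpha.  A series with unit diagonal is invertible, hence
   alpha = u^-1 * u * alpha = u^-1 * eps * u. *)

definition supp :: "('a::order \<Rightarrow> 'a \<Rightarrow> 'k::field) \<Rightarrow> 'a \<Rightarrow> 'a \<Rightarrow> ('a \<times> 'a) set" where
  "supp f x y = {(u, v). x \<le> u \<and> u < v \<and> v \<le> y \<and> f u v \<noteq> 0}"

text \<open>The points of [x,y] that can contribute to a convolution with f at (x,y).\<close>

definition supp_pts :: "('a::order \<Rightarrow> 'a \<Rightarrow> 'k::field) \<Rightarrow> 'a \<Rightarrow> 'a \<Rightarrow> 'a set" where
  "supp_pts f x y = insert x (insert y (fst ` supp f x y \<union> snd ` supp f x y))"

lemma FI_zero: "f \<in> FI \<Longrightarrow> \<not> x \<le> y \<Longrightarrow> f x y = 0"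
  unfolding FI_def by blast

lemma FI_intro:
  assumes "\<And>x y. \<not> x \<le> y \<Longrightarrow> f x y = 0" and "\<And>x y. x < y \<Longrightarrow> finite (supp f x y)"
  shows "f \<in> FI"
  using assms unfolding FI_def supp_def by blast

lemma finite_supp:
  assumes "f \<in> FI"
  shows "finite (supp f x y)"
proof (cases "x < y")
  case True
  thus ?thesis using assms unfolding FI_def supp_def by blast
next
  case False
  hence "supp f x y = {}" unfolding supp_def using le_less_trans less_le_trans by blast
  thus ?thesis by simp
qed

lemma finite_supp_pts: "f \<in> FI \<Longrightarrow> finite (supp_pts f x y)"
  unfolding supp_pts_def using finite_supp by blast

lemma supp_mono: "x \<le> x' \<Longrightarrow> y' \<le> y \<Longrightarrow> supp f x' y' \<subseteq> supp f x y"
  unfolding supp_def by (auto intro: order_trans)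

lemma conv_sum_gen:
  assumes "finite T" and "\<And>w. x \<le> w \<Longrightarrow> w \<le> y \<Longrightarrow> f x w * g w y \<noteq> 0 \<Longrightarrow> w \<in> T"
  shows "conv f g x y = (\<Sum>w\<in>T. if x \<le> w \<and> w \<le> y then f x w * g w y else 0)"
proof (cases "x \<le> y")
  case True
  let ?A = "{w. x \<le> w \<and> w \<le> y \<and> f x w * g w y \<noteq> 0}"
  have "?A \<subseteq> T" using assms(2) by blast
  hence "(\<Sum>w\<in>T. if x \<le> w \<and> w \<le> y then f x w * g w y else 0)
      = (\<Sum>w\<in>?A. if x \<le> w \<and> w \<le> y then f x w * g w y else 0)"
    by (intro sum.mono_neutral_right[OF assms(1)]) auto
  also have "\<dots> = (\<Sum>w\<in>?A. f x w * g w y)" by (rule sum.cong) auto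
  finally show ?thesis using True unfolding conv_def by simp
next
  case False
  hence "\<not> (x \<le> w \<and> w \<le> y)" for w using order_trans by blast
  hence "(\<Sum>w\<in>T. if x \<le> w \<and> w \<le> y then f x w * g w y else 0) = 0"
    by (intro sum.neutral) auto
  thus ?thesis using False unfolding conv_def by simp
qed

text \<open>Associativity needs exactly these uniform index sets.\<close>

lemma conv_expand_left:
  assumes "f \<in> FI" "finite T" "supp_pts f x y \<subseteq> T" "z \<le> y"
  shows "conv f g x z = (\<Sum>w\<in>T. if x \<le> w \<and> w \<le> z then f x w * g w z else 0)"
proof (rule conv_sum_gen[OF assms(2)])
  fix w assume w: "x \<le> w" "w \<le> z" "f x w * g w z \<noteq> 0"
  hence "w = x \<or> (x, w) \<in> supp f x y"
    using assms(4) unfolding supp_def by (auto intro: order_trans)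
  thus "w \<in> T" using assms(3) unfolding supp_pts_def by force
qed

lemma conv_expand_right:
  assumes "g \<in> FI" "finite T" "supp_pts g x y \<subseteq> T" "x \<le> z"
  shows "conv f g z y = (\<Sum>w\<in>T. if z \<le> w \<and> w \<le> y then f z w * g w y else 0)"
proof (rule conv_sum_gen[OF assms(2)])
  fix w assume w: "z \<le> w" "w \<le> y" "f z w * g w y \<noteq> 0"
  hence "w = y \<or> (w, y) \<in> supp g x y"
    using assms(4) unfolding supp_def by (auto intro: order_trans)
  thus "w \<in> T" using assms(3) unfolding supp_pts_def by force
qed

lemma conv_nonzero:
  assumes "conv f g x y \<noteq> 0"
  shows "\<exists>z. x \<le> z \<and> z \<le> y \<and> f x z \<noteq> 0 \<and> g z y \<noteq> 0"
proof -
  have "x \<le> y" using assms unfolding conv_def by (auto split: if_splits)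
  hence "(\<Sum>z \<in> {z. x \<le> z \<and> z \<le> y \<and> f x z * g z y \<noteq> 0}. f x z * g z y) \<noteq> 0"
    using assms unfolding conv_def by simp
  then obtain z where "z \<in> {z. x \<le> z \<and> z \<le> y \<and> f x z * g z y \<noteq> 0}"
    by (metis (no_types, lifting) sum.neutral)
  thus ?thesis by auto
qed

section \<open>The algebra FI(P)\<close>

lemma conv_FI:
  assumes f: "f \<in> FI" and g: "g \<in> FI"
  shows "conv f g \<in> FI"
proof (rule FI_intro)
  fix x y :: 'a
  show "\<not> x \<le> y \<Longrightarrow> conv f g x y = 0" unfolding conv_def by simp
  let ?E = "fst ` supp f x y \<union> fst ` supp g x y" and ?F = "snd ` supp f x y \<union> snd ` supp g x y"
  have "supp (conv f g) x y \<subseteq> ?E \<times> ?F"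
  proof (clarify)
    fix a b assume "(a, b) \<in> supp (conv f g) x y"
    hence h: "x \<le> a" "a < b" "b \<le> y" "conv f g a b \<noteq> 0" unfolding supp_def by auto
    obtain z where z: "a \<le> z" "z \<le> b" "f a z \<noteq> 0" "g z b \<noteq> 0"
      using conv_nonzero[OF h(4)] by blast
    text \<open>Either the f-step (a,z) or the g-step (z,b) is proper; both lie in [x,y].\<close>
    have "z \<noteq> a \<Longrightarrow> (a, z) \<in> supp f x y" "z \<noteq> b \<Longrightarrow> (z, b) \<in> supp g x y"
      using h z unfolding supp_def by (auto intro: order_trans)
    moreover have "z = a \<Longrightarrow> (a, b) \<in> supp g x y" "z = b \<Longrightarrow> (a, b) \<in> supp f x y"
      using h z unfolding supp_def by auto
    ultimately show "a \<in> ?E \<and> b \<in> ?F" by (cases "z = a"; cases "z = b") force+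
  qed
  moreover have "finite (?E \<times> ?F)" using finite_supp[OF f] finite_supp[OF g] by blast
  ultimately show "finite (supp (conv f g) x y)" by (rule finite_subset)
qed

lemma diff_FI:
  assumes "f \<in> FI" "g \<in> FI"
  shows "f - g \<in> FI"
proof (rule FI_intro)
  fix x y :: 'a
  show "\<not> x \<le> y \<Longrightarrow> (f - g) x y = 0" using assms by (simp add: FI_zero)
  have "supp (f - g) x y \<subseteq> supp f x y \<union> supp g x y" unfolding supp_def by auto
  thus "finite (supp (f - g) x y)"
    using finite_supp[OF assms(1)] finite_supp[OF assms(2)] by (auto intro: finite_subset)
qed

lemma delta_FI: "delta \<in> FI"
  by (rule FI_intro) (auto simp: delta_def supp_def)

lemma diag_part_FI: "diag_part f \<in> FI"
  by (rule FI_intro) (auto simp: diag_part_def supp_def)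

lemma conv_diag_part_left: "conv (diag_part f) g x y = (if x \<le> y then f x x * g x y else 0)"
  by (subst conv_sum_gen[where T="{x}"]) (auto simp: diag_part_def split: if_splits)

lemma conv_delta_left: "g \<in> FI \<Longrightarrow> conv delta g = g"
  by (intro ext, subst conv_sum_gen[where T="{_}"]) (auto simp: delta_def FI_zero split: if_splits)

lemma conv_delta_right: "g \<in> FI \<Longrightarrow> conv g delta = g"
  by (intro ext, subst conv_sum_gen[where T="{_}"]) (auto simp: delta_def FI_zero split: if_splits)

lemma conv_diagonal: "conv f g x x = f x x * g x x"
  by (subst conv_sum_gen[where T="{x}"]) (auto intro: order_antisym)

lemma conv_row: "(\<And>w. f x w = f' x w) \<Longrightarrow> conv f g x y = conv f' g x y"
  unfolding conv_def by simp

lemma conv_diff_left: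
  assumes h: "h \<in> FI"
  shows "conv (f - g) h = conv f h - conv g h"
proof (intro ext)
  fix x y
  have T: "finite (supp_pts h x y)" by (rule finite_supp_pts[OF h])
  note expand = conv_expand_right[OF h T order_refl order_refl]
  show "conv (f - g) h x y = (conv f h - conv g h) x y"
    unfolding fun_diff_def expand
    by (simp add: sum_subtractf[symmetric] left_diff_distrib if_distrib cong: if_cong)
qed

lemma conv_assoc:
  assumes f: "f \<in> FI" and g: "g \<in> FI" and h: "h \<in> FI"
  shows "conv (conv f g) h = conv f (conv g h)"
proof (intro ext)
  fix x y
  define T where "T = supp_pts f x y \<union> supp_pts h x y"
  have T: "finite T" using finite_supp_pts f h T_def by auto
  have Tf: "supp_pts f x y \<subseteq> T" and Th: "supp_pts h x y \<subseteq> T" unfolding T_def by auto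
  text \<open>Both sides equal the double sum of f(x,w) g(w,z) h(z,y) over x \<le> w \<le> z \<le> y.\<close>
  let ?t = "\<lambda>w z. if x \<le> w \<and> w \<le> z \<and> z \<le> y then f x w * g w z * h z y else 0"
  have "conv (conv f g) h x y = (\<Sum>z\<in>T. if x \<le> z \<and> z \<le> y then conv f g x z * h z y else 0)"
    by (rule conv_expand_right[OF h T Th order_refl])
  also have "\<dots> = (\<Sum>z\<in>T. \<Sum>w\<in>T. ?t w z)"
  proof (intro sum.cong refl)
    fix z
    show "(if x \<le> z \<and> z \<le> y then conv f g x z * h z y else 0) = (\<Sum>w\<in>T. ?t w z)"
      by (cases "x \<le> z \<and> z \<le> y")
         (auto simp: conv_expand_left[OF f T Tf] sum_distrib_right
               intro!: sum.cong sum.neutral intro: order_trans)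
  qed
  also have "\<dots> = (\<Sum>w\<in>T. \<Sum>z\<in>T. ?t w z)" by (rule sum.swap)
  also have "\<dots> = (\<Sum>w\<in>T. if x \<le> w \<and> w \<le> y then f x w * conv g h w y else 0)"
  proof (intro sum.cong refl)
    fix w
    show "(\<Sum>z\<in>T. ?t w z) = (if x \<le> w \<and> w \<le> y then f x w * conv g h w y else 0)"
      by (cases "x \<le> w \<and> w \<le> y")
         (auto simp: conv_expand_right[OF h T Th] sum_distrib_left mult.assoc
               intro!: sum.cong sum.neutral intro: order_trans)
  qed
  also have "\<dots> = conv f (conv g h) x y"
    by (rule conv_expand_left[OF f T Tf order_refl, symmetric])
  finally show "conv (conv f g) h x y = conv f (conv g h) x y" .
qed

section \<open>Series with unit diagonal are invertible\<close>

primrec pw :: "('a::order \<Rightarrow> 'a \<Rightarrow> 'k::field) \<Rightarrow> nat \<Rightarrow> 'a \<Rightarrow> 'a \<Rightarrow> 'k" where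
  "pw n 0 = delta"
| "pw n (Suc k) = conv n (pw n k)"

lemma pw_FI: "n \<in> FI \<Longrightarrow> pw n k \<in> FI"
  by (induction k) (auto intro: conv_FI delta_FI)

text \<open>If n vanishes on the diagonal, a nonzero entry of n^k at (x,y) comes from a chain
  x < m_1 < ... < y of k proper steps in the support of n, so supp n x y has at least k
  elements.\<close>

lemma pw_nonzero_chain:
  assumes n: "n \<in> FI" and z: "\<And>x. n x x = 0" and nz: "pw n k x y \<noteq> 0"
  shows "\<exists>S \<subseteq> supp n x y. card S = k"
  using nz
proof (induction k arbitrary: x)
  case 0 thus ?case by auto
next
  case (Suc k)
  have "conv n (pw n k) x y \<noteq> 0" using Suc.prems by simp
  then obtain m where m: "x \<le> m" "m \<le> y" "n x m \<noteq> 0" "pw n k m y \<noteq> 0"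
    using conv_nonzero by blast
  have xm: "x < m" using m(1,3) z by (cases "x = m") auto
  obtain S where S: "S \<subseteq> supp n m y" "card S = k" using Suc.IH[OF m(4)] by blast
  have "finite S" using S(1) finite_supp[OF n] finite_subset by blast
  moreover have "(x, m) \<notin> S" using S(1) xm unfolding supp_def by auto
  moreover have "insert (x, m) S \<subseteq> supp n x y"
    using S(1) supp_mono[of x m y y n] m xm unfolding supp_def by auto
  ultimately show ?case using S(2) by (intro exI[of _ "insert (x, m) S"]) simp
qed

lemma pw_vanish:
  assumes n: "n \<in> FI" and z: "\<And>x. n x x = 0" and k: "card (supp n x y) < k"
  shows "pw n k x y = 0"
proof (rule ccontr)
  assume "pw n k x y \<noteq> 0"
  then obtain S where "S \<subseteq> supp n x y" "card S = k" using pw_nonzero_chain[OF n z] by blast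
  hence "k \<le> card (supp n x y)" using card_mono[OF finite_supp[OF n]] by blast
  thus False using k by simp
qed

text \<open>The geometric series sum_k n^k, truncated at (x,y) where all later terms vanish.\<close>

definition geom_bound :: "('a::order \<Rightarrow> 'a \<Rightarrow> 'k::field) \<Rightarrow> 'a \<Rightarrow> 'a \<Rightarrow> nat" where
  "geom_bound n x y = Suc (card (supp n x y))"

definition geom :: "('a::order \<Rightarrow> 'a \<Rightarrow> 'k::field) \<Rightarrow> 'a \<Rightarrow> 'a \<Rightarrow> 'k" where
  "geom n x y = (\<Sum>k<geom_bound n x y. pw n k x y)"

lemma geom_bound_mono:
  assumes "n \<in> FI" "x \<le> a" "b \<le> y"
  shows "geom_bound n a b \<le> geom_bound n x y"
  unfolding geom_bound_def using card_mono[OF finite_supp[OF assms(1)] supp_mono[OF assms(2,3)]]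
  by simp

lemma geom_eq:
  assumes n: "n \<in> FI" and z: "\<And>x. n x x = 0" and M: "geom_bound n a b \<le> M"
  shows "geom n a b = (\<Sum>k<M. pw n k a b)"
  unfolding geom_def
  by (rule sum.mono_neutral_left) (use M pw_vanish[OF n z] in \<open>auto simp: geom_bound_def\<close>)

lemma geom_FI:
  assumes n: "n \<in> FI" and z: "\<And>x. n x x = 0"
  shows "geom n \<in> FI"
proof (rule FI_intro)
  fix x y :: 'a
  show "\<not> x \<le> y \<Longrightarrow> geom n x y = 0"
    unfolding geom_def using FI_zero[OF pw_FI[OF n]] by simp
  have "supp (geom n) x y \<subseteq> (\<Union>k<geom_bound n x y. supp (pw n k) x y)"
  proof (clarify)
    fix a b assume "(a, b) \<in> supp (geom n) x y"
    hence h: "x \<le> a" "a < b" "b \<le> y" "geom n a b \<noteq> 0" unfolding supp_def by auto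
    have "geom n a b = (\<Sum>k<geom_bound n x y. pw n k a b)"
      by (rule geom_eq[OF n z geom_bound_mono[OF n h(1) h(3)]])
    then obtain k where "k < geom_bound n x y" "pw n k a b \<noteq> 0" using h(4)
      by (metis (no_types, lifting) lessThan_iff sum.neutral)
    thus "(a, b) \<in> (\<Union>k<geom_bound n x y. supp (pw n k) x y)" using h unfolding supp_def by auto
  qed
  moreover have "finite (\<Union>k<geom_bound n x y. supp (pw n k) x y)"
    using finite_supp[OF pw_FI[OF n]] by blast
  ultimately show "finite (supp (geom n) x y)" by (rule finite_subset)
qed

lemma conv_geom:
  assumes n: "n \<in> FI" and z: "\<And>x. n x x = 0"
  shows "conv n (geom n) x y = (\<Sum>k<geom_bound n x y. pw n (Suc k) x y)"
proof -
  let ?M = "geom_bound n x y" and ?T = "supp_pts n x y"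
  have T: "finite ?T" by (rule finite_supp_pts[OF n])
  have "conv n (geom n) x y = (\<Sum>m\<in>?T. if x \<le> m \<and> m \<le> y then n x m * geom n m y else 0)"
    by (rule conv_expand_left[OF n T order_refl order_refl])
  also have "\<dots> = (\<Sum>m\<in>?T. \<Sum>k<?M. if x \<le> m \<and> m \<le> y then n x m * pw n k m y else 0)"
  proof (intro sum.cong refl)
    fix m
    show "(if x \<le> m \<and> m \<le> y then n x m * geom n m y else 0)
        = (\<Sum>k<?M. if x \<le> m \<and> m \<le> y then n x m * pw n k m y else 0)"
    proof (cases "x \<le> m \<and> m \<le> y")
      case True
      hence "geom n m y = (\<Sum>k<?M. pw n k m y)"
        by (intro geom_eq[OF n z geom_bound_mono[OF n]]) auto
      thus ?thesis using True by (simp add: sum_distrib_left)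
    qed (simp only: if_False sum.neutral_const)
  qed
  also have "\<dots> = (\<Sum>k<?M. \<Sum>m\<in>?T. if x \<le> m \<and> m \<le> y then n x m * pw n k m y else 0)"
    by (rule sum.swap)
  also have "\<dots> = (\<Sum>k<?M. pw n (Suc k) x y)"
    by (simp add: conv_expand_left[OF n T order_refl order_refl])
  finally show ?thesis .
qed

text \<open>geom n is a right inverse of delta - n: the product telescopes to n^0 - n^M = delta.\<close>

lemma geom_right_inverse:
  assumes n: "n \<in> FI" and z: "\<And>x. n x x = 0"
  shows "conv (delta - n) (geom n) = delta"
proof (intro ext)
  fix x y
  have w: "geom n \<in> FI" by (rule geom_FI[OF n z])
  let ?M = "geom_bound n x y"
  have "conv (delta - n) (geom n) x y = geom n x y - conv n (geom n) x y"
    by (simp add: conv_diff_left[OF w] conv_delta_left[OF w])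
  also have "\<dots> = (\<Sum>k<?M. pw n k x y - pw n (Suc k) x y)"
    by (simp add: conv_geom[OF n z] geom_def sum_subtractf)
  also have "\<dots> = pw n 0 x y - pw n ?M x y" by (rule sum_lessThan_telescope')
  also have "pw n ?M x y = 0" by (rule pw_vanish[OF n z]) (simp add: geom_bound_def)
  finally show "conv (delta - n) (geom n) x y = delta x y" by (simp only: pw.simps(1) diff_zero)
qed

lemma right_inverse_exists:
  assumes u: "u \<in> FI" and d: "\<And>x. u x x = 1"
  shows "\<exists>w\<in>FI. conv u w = delta"
proof -
  define n where "n = delta - u"
  have n: "n \<in> FI" unfolding n_def by (rule diff_FI[OF delta_FI u])
  have "\<And>x. n x x = 0" unfolding n_def using d by (simp add: delta_def)
  moreover have "u = delta - n" unfolding n_def by (intro ext) simp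
  ultimately show ?thesis using geom_FI[OF n] geom_right_inverse[OF n] by auto
qed

text \<open>Every right inverse w of u again has unit diagonal, so it has a right inverse v of
  its own, and u = u (w v) = (u w) v = v; hence w is also a left inverse.\<close>

lemma inverse_exists:
  assumes u: "u \<in> FI" and d: "\<And>x. u x x = 1"
  shows "\<exists>w\<in>FI. conv u w = delta \<and> conv w u = delta"
proof -
  obtain w where w: "w \<in> FI" "conv u w = delta" using right_inverse_exists[OF u d] by blast
  have "w x x = 1" for x
    using conv_diagonal[of u w x] w(2) d by (simp add: delta_def)
  then obtain v where v: "v \<in> FI" "conv w v = delta" using right_inverse_exists[OF w(1)] by blast
  have "u = conv (conv u w) v" by (simp add: conv_assoc[OF u w(1) v(1)] v(2) conv_delta_right[OF u])
  also have "\<dots> = v" by (simp add: w(2) conv_delta_left[OF v(1)])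
  finally show ?thesis using w v by auto
qed

section \<open>Idempotents are conjugate to their diagonal part\<close>

lemma idempotent_diagonal:
  assumes "conv \<alpha> \<alpha> = \<alpha>"
  shows "\<alpha> x x = 0 \<or> \<alpha> x x = 1"
  using conv_diagonal[of \<alpha> \<alpha> x] assms by (metis mult_cancel_right1 mult_zero_right)

lemma diag_part_idempotent:
  assumes "conv \<alpha> \<alpha> = \<alpha>"
  shows "conv (diag_part \<alpha>) (diag_part \<alpha>) = diag_part \<alpha>"
  using idempotent_diagonal[OF assms]
  by (intro ext) (auto simp: conv_diag_part_left diag_part_def)

text \<open>The conjugating series u = eps*alpha + (delta - eps)*(delta - alpha), written
  row by row: row x of u is row x of alpha if alpha(x,x) = 1, else that of delta - alpha.\<close>

definition conjugator :: "('a::order \<Rightarrow> 'a \<Rightarrow> 'k::field) \<Rightarrow> 'a \<Rightarrow> 'a \<Rightarrow> 'k" where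
  "conjugator \<alpha> x y = \<alpha> x x * \<alpha> x y + (1 - \<alpha> x x) * (delta x y - \<alpha> x y)"

lemma conjugator_FI:
  assumes a: "\<alpha> \<in> FI"
  shows "conjugator \<alpha> \<in> FI"
proof (rule FI_intro)
  fix x y :: 'a
  show "\<not> x \<le> y \<Longrightarrow> conjugator \<alpha> x y = 0"
    using FI_zero[OF a, of x y] by (auto simp: conjugator_def delta_def)
  have "supp (conjugator \<alpha>) x y \<subseteq> supp \<alpha> x y"
    unfolding supp_def conjugator_def delta_def by auto
  thus "finite (supp (conjugator \<alpha>) x y)" using finite_supp[OF a] finite_subset by blast
qed

lemma conjugator_diagonal:
  assumes "conv \<alpha> \<alpha> = \<alpha>"
  shows "conjugator \<alpha> x x = 1"
  using idempotent_diagonal[OF assms, of x] by (auto simp: conjugator_def delta_def)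

lemma diag_part_conv_conjugator:
  assumes "conv \<alpha> \<alpha> = \<alpha>"
  shows "conv (diag_part \<alpha>) (conjugator \<alpha>) = conv (diag_part \<alpha>) \<alpha>"
proof (intro ext)
  fix x y
  show "conv (diag_part \<alpha>) (conjugator \<alpha>) x y = conv (diag_part \<alpha>) \<alpha> x y"
    using idempotent_diagonal[OF assms, of x] by (auto simp: conv_diag_part_left conjugator_def)
qed

text \<open>Rows of u with alpha(x,x) = 1 reproduce alpha * alpha = alpha, the other rows give
  (delta - alpha) * alpha = 0; in both cases this is row x of eps * alpha.\<close>

lemma conjugator_conv:
  assumes a: "\<alpha> \<in> FI" and idem: "conv \<alpha> \<alpha> = \<alpha>"
  shows "conv (conjugator \<alpha>) \<alpha> = conv (diag_part \<alpha>) \<alpha>"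
proof (intro ext)
  fix x y
  consider "\<alpha> x x = 1" | "\<alpha> x x = 0" using idempotent_diagonal[OF idem] by blast
  then show "conv (conjugator \<alpha>) \<alpha> x y = conv (diag_part \<alpha>) \<alpha> x y"
  proof cases
    case 1
    hence "conv (conjugator \<alpha>) \<alpha> x y = conv \<alpha> \<alpha> x y"
      by (intro conv_row) (simp add: conjugator_def)
    thus ?thesis using 1 idem FI_zero[OF a, of x y] by (simp add: conv_diag_part_left)
  next
    case 2
    hence "conv (conjugator \<alpha>) \<alpha> x y = conv (delta - \<alpha>) \<alpha> x y"
      by (intro conv_row) (simp add: conjugator_def)
    also have "\<dots> = 0" by (simp add: conv_diff_left[OF a] conv_delta_left[OF a] idem)
    finally show ?thesis using 2 by (simp add: conv_diag_part_left)
  qed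
qed

theorem theorem3:
  fixes \<alpha> :: "'a::order \<Rightarrow> 'a \<Rightarrow> 'k::field"
  assumes "\<alpha> \<in> FI" and "conv \<alpha> \<alpha> = \<alpha>"
  shows "conv (diag_part \<alpha>) (diag_part \<alpha>) = diag_part \<alpha> \<and>
         (\<exists>\<beta> \<gamma>. \<beta> \<in> FI \<and> \<gamma> \<in> FI \<and> conv \<beta> \<gamma> = delta \<and> conv \<gamma> \<beta> = delta \<and>
               \<alpha> = conv (conv \<gamma> (diag_part \<alpha>)) \<beta>)"
proof -
  let ?\<epsilon> = "diag_part \<alpha>" and ?u = "conjugator \<alpha>"
  have u: "?u \<in> FI" by (rule conjugator_FI[OF assms(1)])
  obtain w where w: "w \<in> FI" "conv ?u w = delta" "conv w ?u = delta"
    using inverse_exists[OF u conjugator_diagonal[OF assms(2)]] by blast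
  have "conv (conv w ?\<epsilon>) ?u = conv w (conv ?\<epsilon> ?u)" by (rule conv_assoc[OF w(1) diag_part_FI u])
  also have "\<dots> = conv w (conv ?u \<alpha>)"
    by (simp add: diag_part_conv_conjugator[OF assms(2)] conjugator_conv[OF assms])
  also have "\<dots> = \<alpha>"
    by (simp add: conv_assoc[OF w(1) u assms(1), symmetric] w(3) conv_delta_left[OF assms(1)])
  finally show ?thesis using diag_part_idempotent[OF assms(2)] u w by metis
qed

end
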